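(* Let $E$ be a Banach lattice. Then the set $B_{UDP}(E)$ of all $uaw$-Dunford-Pettis operators on $E$ is a subalgebra of the algebra $B(E)$ of all bounded operators on $E$.
   Context: A net $(x_\alpha)$ in a Banach lattice $E$ is $uaw$-convergent to $x$ if $|x_\alpha-x|\wedge u\to 0$ weakly for every $u\in E_+$. A bounded operator $T\colon E\to E$ is $uaw$-Dunford-Pettis if for every norm bounded sequence $(x_n)$ in $E$ that is $uaw$-convergent to $0$ one has $\|Tx_n\|\to 0$. *)

theory Defs
  imports "HOL-Analysis.Analysis"
begin

class banach_lattice = banach + ordered_real_vector + lattice +
  assumes lattice_norm_mono: "sup x (- x) \<le> sup y (- y) \<Longrightarrow> norm x \<le> norm y"

definition lmod :: "'a::banach_lattice \<Rightarrow> 'a" where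
  "lmod x = sup x (- x)"

definition weakly_tendsto :: "(nat \<Rightarrow> 'a::real_normed_vector) \<Rightarrow> 'a \<Rightarrow> bool" where
  "weakly_tendsto x l \<longleftrightarrow>
     (\<forall>f :: 'a \<Rightarrow> real. bounded_linear f \<longrightarrow> (\<lambda>n. f (x n)) \<longlonglongrightarrow> f l)"

definition uaw_tendsto :: "(nat \<Rightarrow> 'a::banach_lattice) \<Rightarrow> 'a \<Rightarrow> bool" where
  "uaw_tendsto x l \<longleftrightarrow>
     (\<forall>u. 0 \<le> u \<longrightarrow> weakly_tendsto (\<lambda>n. inf (lmod (x n - l)) u) 0)"

definition uaw_DP :: "('a::banach_lattice \<Rightarrow> 'a) \<Rightarrow> bool" where
  "uaw_DP T \<longleftrightarrow> bounded_linear T \<and>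
     (\<forall>x :: nat \<Rightarrow> 'a. bounded (range x) \<and> uaw_tendsto x 0 \<longrightarrow>
        (\<lambda>n. norm (T (x n))) \<longlonglongrightarrow> 0)"

end

theory Submission
  imports Defs
begin

lemma uaw_DP_iff_tendsto_zero:
  "uaw_DP T \<longleftrightarrow> bounded_linear T \<and>
     (\<forall>x. bounded (range x) \<and> uaw_tendsto x 0 \<longrightarrow> (\<lambda>n. T (x n)) \<longlonglongrightarrow> 0)"
  by (simp add: uaw_DP_def tendsto_norm_zero_iff)

lemma uaw_DP_bounded_linear: "uaw_DP T \<Longrightarrow> bounded_linear T"
  by (simp add: uaw_DP_def)

lemma uaw_DP_zero: "uaw_DP (\<lambda>x. 0)"
  by (simp add: uaw_DP_def bounded_linear_zero)

lemma uaw_DP_add: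
  assumes "uaw_DP S" "uaw_DP T"
  shows "uaw_DP (\<lambda>x. S x + T x)"
  using assms tendsto_add[where a = 0 and b = 0]
  by (fastforce simp: uaw_DP_iff_tendsto_zero intro: bounded_linear_add)

lemma uaw_DP_scaleR:
  assumes "uaw_DP T"
  shows "uaw_DP (\<lambda>x. c *\<^sub>R T x)"
  using assms tendsto_scaleR[OF tendsto_const[of c], where b = 0]
  by (fastforce simp: uaw_DP_iff_tendsto_zero
      intro: bounded_linear_compose[OF bounded_linear_scaleR_right])

lemma uaw_DP_compose_left:
  assumes S: "bounded_linear S" and T: "uaw_DP T"
  shows "uaw_DP (S \<circ> T)"
proof -
  have "(\<lambda>n. S (T (x n))) \<longlonglongrightarrow> 0"
    if "bounded (range x)" "uaw_tendsto x 0" for x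
    using bounded_linear.tendsto[OF S, of "\<lambda>n. T (x n)" 0] T that
    by (simp add: uaw_DP_iff_tendsto_zero linear_0[OF bounded_linear.linear[OF S]])
  with S T show ?thesis
    by (simp add: uaw_DP_iff_tendsto_zero bounded_linear_compose o_def)
qed

theorem corollary2p8:
  fixes B_UDP :: "('a::banach_lattice \<Rightarrow> 'a) set"
  defines "B_UDP \<equiv> {T. uaw_DP T}"
  shows "B_UDP \<subseteq> {T. bounded_linear T}
    \<and> (\<lambda>x. 0) \<in> B_UDP
    \<and> (\<forall>S\<in>B_UDP. \<forall>T\<in>B_UDP. (\<lambda>x. S x + T x) \<in> B_UDP)
    \<and> (\<forall>c::real. \<forall>T\<in>B_UDP. (\<lambda>x. c *\<^sub>R T x) \<in> B_UDP)
    \<and> (\<forall>S\<in>B_UDP. \<forall>T\<in>B_UDP. S \<circ> T \<in> B_UDP)"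
  unfolding B_UDP_def
  by (auto intro: uaw_DP_bounded_linear uaw_DP_zero uaw_DP_add uaw_DP_scaleR
      uaw_DP_compose_left)

end
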